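(* Consider a $K$-armed bandit with $K>1$ whose realized rewards satisfy $R_t(a)\in[-R_{\max},R_{\max}]$, and let $\eta>0$. Let $\pi_{\boldsymbol\theta_t}$ be a softmax policy, $a_t\sim\pi_{\boldsymbol\theta_t}$, $\hat r_t(a)=\mathbb I\{a_t=a\}R_t(a_t)/\pi_{\boldsymbol\theta_t}(a)$, and $$\widehat\nabla\Phi_\eta(\boldsymbol\theta_t)=(\mathrm{diag}(\pi_{\boldsymbol\theta_t})-\pi_{\boldsymbol\theta_t}\pi_{\boldsymbol\theta_t}^\top)\hat{\mathbf r}_t+\frac1\eta(\mathbf 1-K\pi_{\boldsymbol\theta_t}).$$ Then $$\|\widehat\nabla\Phi_\eta(\boldsymbol\theta_t)\|_2\le\sqrt2R_{\max}\big(1-\pi_{\boldsymbol\theta_t}(a_t)\big)+\frac{2K}{\eta}.$$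
   Context: Softmax policy $\pi_{\boldsymbol\theta}(a)=e^{\theta(a)}/\sum_be^{\theta(b)}$; $\widehat\nabla\Phi_\eta$ is the LB-SGB stochastic gradient of $\Phi_\eta(\boldsymbol\theta)=\pi_{\boldsymbol\theta}^\top\mathbf r+\frac1\eta\sum_a\log\pi_{\boldsymbol\theta}(a)$. *)

theory Defs
  imports "HOL-Analysis.Analysis"
begin

text \<open>Arms are indexed by a finite type 'n, so K = CARD('n); vectors in R^K are real^'n.\<close>

definition softmax :: "real^'n \<Rightarrow> real^'n" where
  "softmax \<theta> = (\<chi> a. exp (\<theta>$a) / (\<Sum>b\<in>UNIV. exp (\<theta>$b)))"

definition diag_mat :: "real^'n \<Rightarrow> real^'n^'n" where
  "diag_mat v = (\<chi> i j. if i = j then v$i else 0)"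

definition outer_prod :: "real^'n \<Rightarrow> real^'n \<Rightarrow> real^'n^'n" where
  "outer_prod u v = (\<chi> i j. u$i * v$j)"

definition iw_est :: "real^'n \<Rightarrow> 'n \<Rightarrow> real^'n \<Rightarrow> real^'n" where
  "iw_est p act R = (\<chi> a. (if act = a then 1 else 0) * R$act / p$a)"

definition lbsgb_grad :: "real \<Rightarrow> real^'n \<Rightarrow> 'n \<Rightarrow> real^'n \<Rightarrow> real^'n" where
  "lbsgb_grad \<eta> \<theta> act R =
     (diag_mat (softmax \<theta>) - outer_prod (softmax \<theta>) (softmax \<theta>)) *v iw_est (softmax \<theta>) act R
     + (1 / \<eta>) *\<^sub>R (vec 1 - real CARD('n) *\<^sub>R softmax \<theta>)"

end

theory Submission
  imports Defs
begin

text \<open>With \<open>p = softmax \<theta>\<close>, only the coordinate \<open>a\<^sub>t\<close> of the importance-weighted estimate is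
  nonzero, so the reward part of the gradient collapses to \<open>R\<^sub>t(a\<^sub>t) (e\<^sub>a\<^sub>t - p)\<close>. Since \<open>p\<close> is a
  probability vector, the squares of the coordinates \<open>p\<^sub>b\<close>, \<open>b \<noteq> a\<close>, sum to at most
  \<open>(1 - p\<^sub>a)\<^sup>2\<close>, hence \<open>\<parallel>e\<^sub>a - p\<parallel>\<^sup>2 \<le> 2 (1 - p\<^sub>a)\<^sup>2\<close>; the barrier part \<open>\<one> - K p\<close> has norm
  at most \<open>\<parallel>\<one>\<parallel> + K \<parallel>p\<parallel> \<le> 2K\<close>. The triangle inequality combines the two bounds.\<close>

lemma softmax_pos: "softmax \<theta> $ a > 0"
  unfolding softmax_def by (simp add: sum_pos)

lemma sum_softmax: "(\<Sum>a\<in>UNIV. softmax \<theta> $ a) = 1"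
proof -
  have "(\<Sum>b\<in>UNIV. exp (\<theta>$b)) > 0" by (rule sum_pos) auto
  then show ?thesis unfolding softmax_def by (simp add: sum_divide_distrib[symmetric])
qed

lemma softmax_jacobian_mult_iw_est:
  fixes p R :: "real^'n"
  assumes "p $ act \<noteq> 0"
  shows "(diag_mat p - outer_prod p p) *v iw_est p act R = R $ act *\<^sub>R (axis act 1 - p)"
proof -
  have "((diag_mat p - outer_prod p p) *v iw_est p act R) $ i = (R $ act *\<^sub>R (axis act 1 - p)) $ i"
    for i
  proof -
    have "((diag_mat p - outer_prod p p) *v iw_est p act R) $ i
        = (\<Sum>j\<in>UNIV. if j = act
             then ((if i = j then p$i else 0) - p$i * p$j) * (R$act / p$act) else 0)"
      unfolding matrix_vector_mult_def diag_mat_def outer_prod_def iw_est_def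
      by (simp only: vec_lambda_beta, intro sum.cong) auto
    also have "\<dots> = ((if i = act then p$i else 0) - p$i * p$act) * (R$act / p$act)"
      by simp
    also have "\<dots> = (R $ act *\<^sub>R (axis act 1 - p)) $ i"
      using assms by (auto simp: axis_def field_simps)
    finally show ?thesis .
  qed
  then show ?thesis by (simp add: vec_eq_iff)
qed

lemma lbsgb_grad_eq:
  fixes \<theta> :: "real^'n"
  shows "lbsgb_grad \<eta> \<theta> act R = R $ act *\<^sub>R (axis act 1 - softmax \<theta>)
     + (1 / \<eta>) *\<^sub>R (vec 1 - real CARD('n) *\<^sub>R softmax \<theta>)"
  using softmax_pos[of \<theta> act]
  by (simp add: lbsgb_grad_def softmax_jacobian_mult_iw_est)

lemma norm_axis_minus_prob_le:
  fixes p :: "real^'n"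
  assumes nonneg: "\<And>b. p $ b \<ge> 0" and sum1: "(\<Sum>b\<in>UNIV. p $ b) = 1"
  shows "norm (axis a 1 - p) \<le> sqrt 2 * (1 - p $ a)"
proof -
  define S where "S = (\<Sum>b\<in>UNIV - {a}. p $ b)"
  have S_eq: "S = 1 - p $ a"
    using sum1 by (simp add: S_def sum_diff1)
  have S_nonneg: "S \<ge> 0"
    unfolding S_def by (rule sum_nonneg) (use nonneg in auto)
  have "(\<Sum>b\<in>UNIV - {a}. (p $ b)\<^sup>2) \<le> (\<Sum>b\<in>UNIV - {a}. p $ b * S)"
  proof (rule sum_mono)
    fix b assume "b \<in> UNIV - {a}"
    then have "p $ b \<le> S"
      unfolding S_def by (intro member_le_sum) (use nonneg in auto)
    then show "(p $ b)\<^sup>2 \<le> p $ b * S"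
      using nonneg[of b] by (simp add: power2_eq_square mult_left_mono)
  qed
  also have "\<dots> = S\<^sup>2"
    by (simp add: S_def sum_distrib_right power2_eq_square)
  finally have off_diagonal: "(\<Sum>b\<in>UNIV - {a}. (p $ b)\<^sup>2) \<le> S\<^sup>2" .
  have "(norm (axis a 1 - p))\<^sup>2 = (\<Sum>b\<in>UNIV. ((axis a 1 - p) $ b)\<^sup>2)"
    by (simp add: norm_vec_def L2_set_def sum_nonneg)
  also have "\<dots> = (1 - p $ a)\<^sup>2 + (\<Sum>b\<in>UNIV - {a}. (p $ b)\<^sup>2)"
    by (simp add: sum.remove[of UNIV a] axis_def)
  also have "\<dots> \<le> (sqrt 2 * (1 - p $ a))\<^sup>2"
    using off_diagonal S_eq by (simp add: power_mult_distrib)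
  finally have "(norm (axis a 1 - p))\<^sup>2 \<le> (sqrt 2 * (1 - p $ a))\<^sup>2" .
  moreover have "sqrt 2 * (1 - p $ a) \<ge> 0"
    using S_eq S_nonneg by simp
  ultimately show ?thesis
    by (rule power2_le_imp_le)
qed

lemma norm_prob_le_1:
  fixes p :: "real^'n"
  assumes "\<And>b. p $ b \<ge> 0" and "(\<Sum>b\<in>UNIV. p $ b) = 1"
  shows "norm p \<le> 1"
  using norm_le_l1_cart[of p] assms by simp

lemma norm_vec1_minus_card_prob_le:
  fixes p :: "real^'n"
  assumes "\<And>b. p $ b \<ge> 0" and "(\<Sum>b\<in>UNIV. p $ b) = 1"
  shows "norm (vec 1 - real CARD('n) *\<^sub>R p) \<le> 2 * real CARD('n)"
proof -
  have "norm (vec 1 - real CARD('n) *\<^sub>R p) \<le> norm (vec 1 :: real^'n) + real CARD('n) * norm p"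
    using norm_triangle_ineq4[of "vec 1" "real CARD('n) *\<^sub>R p"] by simp
  also have "norm (vec 1 :: real^'n) \<le> real CARD('n)"
    using norm_le_l1_cart[of "vec 1 :: real^'n"] by simp
  also have "real CARD('n) * norm p \<le> real CARD('n)"
    using norm_prob_le_1[OF assms] by (simp add: mult_left_le)
  finally show ?thesis by simp
qed

theorem lemmaC1:
  fixes \<theta> R :: "real^'n" and act :: 'n and Rmax \<eta> :: real
  assumes "CARD('n) > 1"
    and "\<eta> > 0"
    and "\<forall>a. R$a \<in> {-Rmax..Rmax}"
  shows "norm (lbsgb_grad \<eta> \<theta> act R)
           \<le> sqrt 2 * Rmax * (1 - softmax \<theta> $ act) + 2 * real CARD('n) / \<eta>"
proof -
  let ?p = "softmax \<theta>"
  let ?u = "axis act 1 - ?p" and ?w = "vec 1 - real CARD('n) *\<^sub>R ?p"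
  have prob: "\<And>b. ?p $ b \<ge> 0" "(\<Sum>b\<in>UNIV. ?p $ b) = 1"
    using softmax_pos less_imp_le sum_softmax by auto
  have reward: "\<bar>R $ act\<bar> \<le> Rmax"
    using assms(3)[rule_format, of act] by (auto simp: abs_le_iff)
  have "norm (lbsgb_grad \<eta> \<theta> act R) \<le> \<bar>R $ act\<bar> * norm ?u + norm ?w / \<eta>"
    unfolding lbsgb_grad_eq
    using norm_triangle_ineq[of "R $ act *\<^sub>R ?u" "(1 / \<eta>) *\<^sub>R ?w"] assms(2) by simp
  also have "\<bar>R $ act\<bar> * norm ?u \<le> Rmax * (sqrt 2 * (1 - ?p $ act))"
    using mult_mono[OF reward norm_axis_minus_prob_le[OF prob, of act]] reward by simp
  also have "norm ?w / \<eta> \<le> 2 * real CARD('n) / \<eta>"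
    using assms(2) norm_vec1_minus_card_prob_le[OF prob] by (simp add: divide_right_mono)
  finally show ?thesis by (simp add: mult_ac)
qed

end
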